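(* Let $d,m,r,n$ be positive integers, $\sigma,\tau_s,\tau_g>0$, $\phi,\psi:\mathbb{R}\to\mathbb{R}$ measurable with finite second moments under Gaussian inputs, and let $W_i\in\mathbb{R}^{m\times d}$, $W_g,W_u\in\mathbb{R}^{r\times d}$, $W_o\in\mathbb{R}^{d\times m}$, $\widetilde W_o\in\mathbb{R}^{d\times r}$ be independent random matrices with i.i.d. entries distributed $\mathcal{N}(0,\sigma^2)$ (for $W_i,W_g,W_u$), $\mathcal{N}(0,\tau_s^2)$ (for $W_o$), $\mathcal{N}(0,\tau_g^2)$ (for $\widetilde W_o$). Let $F_{\mathrm{single}}(x)=W_o\phi(W_ix)$ and $F_{\mathrm{gate}}(x)=\widetilde W_o[\psi(W_gx)\odot W_ux]$, and for $H\in\mathbb{R}^{n\times d}$ let $F(H)$ denote $F$ applied to each row of $H$. Fix a deterministic $H\in\mathbb{R}^{n\times d}$ all of whose rows have the same Euclidean norm $c$, put $\nu=\sigma^2c^2$, $G_\nu\sim\mathcal{N}(0,\nu)$, and $\rho_0=\frac{\tau_g^2}{\tau_s^2}\frac{r}{m}\frac{\nu\mathbb{E}\psi(G_\nu)^2}{\mathbb{E}\phi(G_\nu)^2}$ (assuming $\mathbb{E}\phi(G_\nu)^2>0$). Let $P_{\mathrm{out}}$ be an orthogonal projector on $\mathbb{R}^d$ (acting on rows), $H^+_{\mathrm{single}}=H+F_{\mathrm{single}}(H)$, $H^+_{\mathrm{gate}}=H+F_{\mathrm{gate}}(H)$, and $A=\mathbb{E}\|P_{\mathrm{out}}F_{\mathrm{single}}(H)\|_F^2$.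 Then $\mathbb{E}\langle P_{\mathrm{out}}H,P_{\mathrm{out}}F(H)\rangle=0$ for $F\in\{F_{\mathrm{single}},F_{\mathrm{gate}}\}$, $$\mathbb{E}\|P_{\mathrm{out}}H^+_{\mathrm{single}}\|_F^2=\|P_{\mathrm{out}}H\|_F^2+A,\qquad \mathbb{E}\|P_{\mathrm{out}}H^+_{\mathrm{gate}}\|_F^2=\|P_{\mathrm{out}}H\|_F^2+\rho_0A,$$ and therefore $\mathbb{E}\|P_{\mathrm{out}}H^+_{\mathrm{gate}}\|_F^2=\bar\rho\,\mathbb{E}\|P_{\mathrm{out}}H^+_{\mathrm{single}}\|_F^2$ with $$\bar\rho=\frac{\|P_{\mathrm{out}}H\|_F^2+\rho_0A}{\|P_{\mathrm{out}}H\|_F^2+A},$$ where $\bar\rho<1$ whenever $A>0$ and $\rho_0<1$.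
   Context: Here $P_{\mathrm{out}}H$ means $HP_{\mathrm{out}}$ (projection of each row), $\langle\cdot,\cdot\rangle$ is the Frobenius inner product, and expectations are over the random weights. This models a residual feed-forward sublayer $H^+=H+F(H)$ at initialization with a single-branch versus a multiplicative gated FFN. *)

theory Defs
  imports "HOL-Probability.Probability"
begin

definition gauss :: "real \<Rightarrow> real measure" where
  "gauss v = (if v = 0 then return lborel 0 else density lborel (normal_density 0 (sqrt v)))"

definition gauss_mat :: "nat \<Rightarrow> nat \<Rightarrow> real \<Rightarrow> (nat \<times> nat \<Rightarrow> real) measure" where
  "gauss_mat nr nc s = PiM ({..<nr} \<times> {..<nc}) (\<lambda>_. density lborel (normal_density 0 s))"

type_synonym rmat = "nat \<times> nat \<Rightarrow> real"

text \<open>Joint law of the independent weights (W_i, W_g, W_u, W_o, W_o~).\<close>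
definition weights :: "nat \<Rightarrow> nat \<Rightarrow> nat \<Rightarrow> real \<Rightarrow> real \<Rightarrow> real \<Rightarrow>
    (rmat \<times> rmat \<times> rmat \<times> rmat \<times> rmat) measure" where
  "weights d m r \<sigma> \<tau>s \<tau>g =
     gauss_mat m d \<sigma> \<Otimes>\<^sub>M (gauss_mat r d \<sigma> \<Otimes>\<^sub>M (gauss_mat r d \<sigma> \<Otimes>\<^sub>M
       (gauss_mat d m \<tau>s \<Otimes>\<^sub>M gauss_mat d r \<tau>g)))"

text \<open>Matrices H in R^(n x d) are functions nat => nat => real, H k l = entry (row k, col l).\<close>

definition F_single :: "nat \<Rightarrow> nat \<Rightarrow> (real \<Rightarrow> real) \<Rightarrow> rmat \<Rightarrow> rmat \<Rightarrow>
    (nat \<Rightarrow> nat \<Rightarrow> real) \<Rightarrow> nat \<Rightarrow> nat \<Rightarrow> real" where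
  "F_single d m \<phi> Wi Wo H k a = (\<Sum>j<m. Wo (a, j) * \<phi> (\<Sum>l<d. Wi (j, l) * H k l))"

definition F_gate :: "nat \<Rightarrow> nat \<Rightarrow> (real \<Rightarrow> real) \<Rightarrow> rmat \<Rightarrow> rmat \<Rightarrow> rmat \<Rightarrow>
    (nat \<Rightarrow> nat \<Rightarrow> real) \<Rightarrow> nat \<Rightarrow> nat \<Rightarrow> real" where
  "F_gate d r \<psi> Wg Wu Wot H k a =
     (\<Sum>j<r. Wot (a, j) * (\<psi> (\<Sum>l<d. Wg (j, l) * H k l) * (\<Sum>l<d. Wu (j, l) * H k l)))"

definition proj_rows :: "nat \<Rightarrow> (nat \<Rightarrow> nat \<Rightarrow> real) \<Rightarrow> (nat \<Rightarrow> nat \<Rightarrow> real) \<Rightarrow> nat \<Rightarrow> nat \<Rightarrow> real" where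
  "proj_rows d P X k a = (\<Sum>l<d. X k l * P l a)"

definition frob_inner :: "nat \<Rightarrow> nat \<Rightarrow> (nat \<Rightarrow> nat \<Rightarrow> real) \<Rightarrow> (nat \<Rightarrow> nat \<Rightarrow> real) \<Rightarrow> real" where
  "frob_inner n d X Y = (\<Sum>k<n. \<Sum>a<d. X k a * Y k a)"

definition frob_sq :: "nat \<Rightarrow> nat \<Rightarrow> (nat \<Rightarrow> nat \<Rightarrow> real) \<Rightarrow> real" where
  "frob_sq n d X = (\<Sum>k<n. \<Sum>a<d. (X k a)\<^sup>2)"

definition orth_projector :: "nat \<Rightarrow> (nat \<Rightarrow> nat \<Rightarrow> real) \<Rightarrow> bool" where
  "orth_projector d P \<longleftrightarrow>
     (\<forall>i<d. \<forall>j<d. P i j = P j i) \<and> (\<forall>i<d. \<forall>j<d. (\<Sum>k<d. P i k * P k j) = P i j)"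

end

theory Submission
  imports Defs
begin

text \<open>
  The output weights of either sublayer are centred and independent of the hidden activations, so
  the cross term between \<open>P H\<close> and \<open>P F(H)\<close> has mean zero and distinct output entries are
  uncorrelated; hence \<open>E |P F(H)|\<^sup>2 = n \<cdot> width \<cdot> \<tau>\<^sup>2 \<cdot> E y\<^sup>2 \<cdot> |P|\<^sup>2\<close> for a single hidden activation \<open>y\<close>.
  A pre-activation \<open>w\<^sub>j \<bullet> x\<close> with \<open>|x| = c\<close> is a sum of independent centred Gaussians, hence
  distributed as \<open>N(0, \<nu>)\<close>. So \<open>E y\<^sup>2 = E \<phi>(G)\<^sup>2\<close> for the single branch, while the gate and
  up rows of the gated branch are independent, giving \<open>E y\<^sup>2 = E \<psi>(G)\<^sup>2 \<cdot> E G\<^sup>2 = \<nu> E \<psi>(G)\<^sup>2\<close>.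
  The two energies therefore differ by the factor \<open>\<rho>\<^sub>0\<close>.
\<close>

section \<open>Centred Gaussian laws and product measures\<close>

lemma gauss_first_moment:
  assumes "0 \<le> v"
  shows "has_bochner_integral (gauss v) (\<lambda>x. x) 0"
proof (cases "v = 0")
  case True
  then show ?thesis
    by (simp add: gauss_def has_bochner_integral_iff integral_return integrable_iff_bounded nn_integral_return)
next
  case False
  with assms have "0 < sqrt v" by simp
  with False show ?thesis
    unfolding gauss_def by (auto intro!: has_bochner_integral_density normal_moment_nz_1)
qed

lemma gauss_second_moment:
  assumes "0 \<le> v"
  shows "has_bochner_integral (gauss v) (\<lambda>x. x\<^sup>2) v"
proof (cases "v = 0")
  case True
  then show ?thesis
    by (simp add: gauss_def has_bochner_integral_iff integral_return integrable_iff_bounded nn_integral_return)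
next
  case False
  with assms have s: "0 < sqrt v" by simp
  have "has_bochner_integral lborel (\<lambda>x. normal_density 0 (sqrt v) x * x\<^sup>2) v"
    using normal_moment_even[OF s, of 0 1] assms by (simp add: power2_eq_square)
  with False show ?thesis
    unfolding gauss_def by (auto intro!: has_bochner_integral_density)
qed

lemma has_bochner_integral_distrD:
  fixes f :: "'b \<Rightarrow> 'c::{banach, second_countable_topology}"
  assumes "g \<in> measurable M N" "has_bochner_integral (distr M N g) f y"
  shows "has_bochner_integral M (\<lambda>x. f (g x)) y"
proof -
  have "f \<in> borel_measurable N"
    using assms(2) borel_measurable_has_bochner_integral by (metis measurable_distr_eq1)
  with assms show ?thesis
    by (simp add: has_bochner_integral_iff integrable_distr_eq integral_distr)
qed

lemma integrable_mult_of_square_integrable: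
  fixes f g :: "'a \<Rightarrow> real"
  assumes [measurable]: "f \<in> borel_measurable M" "g \<in> borel_measurable M"
    and "integrable M (\<lambda>x. (f x)\<^sup>2)" "integrable M (\<lambda>x. (g x)\<^sup>2)"
  shows "integrable M (\<lambda>x. f x * g x)"
proof (rule Bochner_Integration.integrable_bound)
  show "integrable M (\<lambda>x. (f x)\<^sup>2 + (g x)\<^sup>2)" using assms by simp
  show "AE x in M. norm (f x * g x) \<le> norm ((f x)\<^sup>2 + (g x)\<^sup>2)"
  proof (rule AE_I2)
    fix x
    have "2 * \<bar>f x\<bar> * \<bar>g x\<bar> \<le> (f x)\<^sup>2 + (g x)\<^sup>2"
      using sum_squares_bound[of "\<bar>f x\<bar>" "\<bar>g x\<bar>"] by simp
    moreover have "0 \<le> \<bar>f x\<bar> * \<bar>g x\<bar>" by simp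
    ultimately have "\<bar>f x\<bar> * \<bar>g x\<bar> \<le> (f x)\<^sup>2 + (g x)\<^sup>2" by linarith
    then show "norm (f x * g x) \<le> norm ((f x)\<^sup>2 + (g x)\<^sup>2)"
      by (simp add: abs_mult)
  qed
qed simp

lemma has_bochner_integral_pair_measure_mult:
  fixes f :: "'a \<Rightarrow> real" and g :: "'b \<Rightarrow> real"
  assumes "prob_space M1" "prob_space M2" "integrable M1 f" "integrable M2 g"
  shows "has_bochner_integral (M1 \<Otimes>\<^sub>M M2) (\<lambda>z. f (fst z) * g (snd z))
           ((\<integral>x. f x \<partial>M1) * (\<integral>y. g y \<partial>M2))"
proof -
  interpret pair_prob_space M1 M2
    using assms(1,2) by (simp add: pair_prob_space_def pair_sigma_finite_def prob_space_imp_sigma_finite)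
  have [measurable]: "f \<in> borel_measurable M1" "g \<in> borel_measurable M2"
    using assms(3,4) by auto
  have int: "integrable (M1 \<Otimes>\<^sub>M M2) (\<lambda>z. f (fst z) * g (snd z))"
    by (rule Fubini_integrable) (use assms(3,4) in \<open>auto simp: abs_mult\<close>)
  then show ?thesis
    by (simp add: has_bochner_integral_iff integral_fst'[OF int, symmetric])
qed

lemma distr_pair_snd:
  assumes "prob_space M1" "sigma_finite_measure M2"
  shows "distr (M1 \<Otimes>\<^sub>M M2) M2 snd = M2"
proof (rule measure_eqI)
  interpret M1: prob_space M1 by fact
  interpret M2: sigma_finite_measure M2 by fact
  fix A assume "A \<in> sets (distr (M1 \<Otimes>\<^sub>M M2) M2 snd)"
  then have A: "A \<in> sets M2" by simp
  then have "snd -` A \<inter> space (M1 \<Otimes>\<^sub>M M2) = space M1 \<times> A"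
    using sets.sets_into_space by (auto simp: space_pair_measure)
  with A show "emeasure (distr (M1 \<Otimes>\<^sub>M M2) M2 snd) A = emeasure M2 A"
    by (simp add: emeasure_distr M2.emeasure_pair_measure_Times M1.emeasure_space_1)
qed simp

lemma distr_pair_measure_assoc:
  assumes "sigma_finite_measure A" "sigma_finite_measure B" "sigma_finite_measure C"
  shows "distr (A \<Otimes>\<^sub>M (B \<Otimes>\<^sub>M C)) ((A \<Otimes>\<^sub>M B) \<Otimes>\<^sub>M C) (\<lambda>(x, y, z). ((x, y), z))
           = (A \<Otimes>\<^sub>M B) \<Otimes>\<^sub>M C"
proof (rule sym, rule pair_measure_eqI)
  interpret B: sigma_finite_measure B by fact
  interpret C: sigma_finite_measure C by fact
  interpret AB: pair_sigma_finite A B using assms by (simp add: pair_sigma_finite_def)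
  interpret BC: pair_sigma_finite B C using assms by (simp add: pair_sigma_finite_def)
  show "sigma_finite_measure (A \<Otimes>\<^sub>M B)" ..
  show "sigma_finite_measure C" by fact
  show "sets ((A \<Otimes>\<^sub>M B) \<Otimes>\<^sub>M C)
      = sets (distr (A \<Otimes>\<^sub>M (B \<Otimes>\<^sub>M C)) ((A \<Otimes>\<^sub>M B) \<Otimes>\<^sub>M C) (\<lambda>(x, y, z). ((x, y), z)))"
    by simp
  fix S T assume S: "S \<in> sets (A \<Otimes>\<^sub>M B)" and T: "T \<in> sets C"
  let ?X = "{(x, y, z). (x, y) \<in> S \<and> z \<in> T}"
  have X: "?X \<in> sets (A \<Otimes>\<^sub>M (B \<Otimes>\<^sub>M C))"
  proof -
    have "?X = (\<lambda>(x, y, z). ((x, y), z)) -` (S \<times> T) \<inter> space (A \<Otimes>\<^sub>M (B \<Otimes>\<^sub>M C))"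
      using sets.sets_into_space[OF S] sets.sets_into_space[OF T] by (auto simp: space_pair_measure)
    also have "\<dots> \<in> sets (A \<Otimes>\<^sub>M (B \<Otimes>\<^sub>M C))"
      using S T by (intro measurable_sets[where A="(A \<Otimes>\<^sub>M B) \<Otimes>\<^sub>M C"]) auto
    finally show ?thesis .
  qed
  have "emeasure (distr (A \<Otimes>\<^sub>M (B \<Otimes>\<^sub>M C)) ((A \<Otimes>\<^sub>M B) \<Otimes>\<^sub>M C) (\<lambda>(x, y, z). ((x, y), z))) (S \<times> T)
      = emeasure (A \<Otimes>\<^sub>M (B \<Otimes>\<^sub>M C)) ?X"
    using S T sets.sets_into_space[OF S] sets.sets_into_space[OF T]
    by (subst emeasure_distr) (auto intro!: arg_cong[where f="emeasure _"] simp: space_pair_measure)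
  also have "\<dots> = (\<integral>\<^sup>+x. emeasure (B \<Otimes>\<^sub>M C) ((Pair x -` S) \<times> T) \<partial>A)"
    using X by (subst BC.emeasure_pair_measure_alt) (auto intro!: nn_integral_cong arg_cong[where f="emeasure _"])
  also have "\<dots> = (\<integral>\<^sup>+x. emeasure B (Pair x -` S) * emeasure C T \<partial>A)"
    using S T by (intro nn_integral_cong C.emeasure_pair_measure_Times) (auto intro: sets_Pair1)
  also have "\<dots> = emeasure (A \<Otimes>\<^sub>M B) S * emeasure C T"
    using S by (simp add: nn_integral_multc B.emeasure_pair_measure_alt B.measurable_emeasure_Pair)
  finally show "emeasure (A \<Otimes>\<^sub>M B) S * emeasure C T
      = emeasure (distr (A \<Otimes>\<^sub>M (B \<Otimes>\<^sub>M C)) ((A \<Otimes>\<^sub>M B) \<Otimes>\<^sub>M C) (\<lambda>(x, y, z). ((x, y), z))) (S \<times> T)"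
    by simp
qed

lemma distr_pair_measure_map_snd:
  assumes "sigma_finite_measure M1" "sigma_finite_measure N" "g \<in> measurable M2 N" "distr M2 N g = N"
  shows "distr (M1 \<Otimes>\<^sub>M M2) (M1 \<Otimes>\<^sub>M N) (\<lambda>(x, y). (x, g y)) = M1 \<Otimes>\<^sub>M N"
  using pair_measure_distr[of "\<lambda>x. x" M1 M1 g M2 N] assms by simp

section \<open>Gaussian weight matrices\<close>

lemma prob_space_gauss_mat: "0 < s \<Longrightarrow> prob_space (gauss_mat nr nc s)"
  unfolding gauss_mat_def by (intro prob_space_PiM prob_space_normal_density)

lemma distr_gauss_mat_component:
  assumes "p \<in> {..<nr} \<times> {..<nc}" "0 < s"
  shows "distr (gauss_mat nr nc s) lborel (\<lambda>W. W p) = density lborel (normal_density 0 s)"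
proof -
  have "distr (gauss_mat nr nc s) lborel (\<lambda>W. W p)
      = distr (gauss_mat nr nc s) (density lborel (normal_density 0 s)) (\<lambda>W. W p)"
    by (rule distr_cong) auto
  also have "\<dots> = density lborel (normal_density 0 s)"
    unfolding gauss_mat_def using assms
    by (intro distr_PiM_component prob_space_normal_density) auto
  finally show ?thesis .
qed

lemma measurable_gauss_mat_component:
  "p \<in> {..<nr} \<times> {..<nc} \<Longrightarrow> (\<lambda>W. W p) \<in> borel_measurable (gauss_mat nr nc s)"
proof -
  assume "p \<in> {..<nr} \<times> {..<nc}"
  then have "(\<lambda>W. W p) \<in> measurable (gauss_mat nr nc s) (density lborel (normal_density 0 s))"
    unfolding gauss_mat_def by (rule measurable_component_singleton)
  then show ?thesis by (simp cong: measurable_cong_sets)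
qed

lemma indep_vars_gauss_mat_components:
  assumes "0 < s"
  shows "prob_space.indep_vars (gauss_mat nr nc s) (\<lambda>_. borel) (\<lambda>p W. W p) ({..<nr} \<times> {..<nc})"
proof -
  interpret prob_space "gauss_mat nr nc s" by (rule prob_space_gauss_mat) fact
  show ?thesis
  proof (cases "{..<nr} \<times> {..<nc} = ({} :: (nat \<times> nat) set)")
    case True
    then show ?thesis by (simp only: True) (simp add: indep_vars_def indep_sets_def)
  next
    case False
    have "distr (gauss_mat nr nc s) (\<Pi>\<^sub>M p\<in>{..<nr} \<times> {..<nc}. borel) (\<lambda>W. \<lambda>p\<in>{..<nr} \<times> {..<nc}. W p)
        = gauss_mat nr nc s"
      by (subst distr_cong[where L="gauss_mat nr nc s" and g="\<lambda>W. W"])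
         (auto simp: gauss_mat_def space_PiM intro!: sets_PiM_cong)
    also have "\<dots> = (\<Pi>\<^sub>M p\<in>{..<nr} \<times> {..<nc}. distr (gauss_mat nr nc s) lborel (\<lambda>W. W p))"
      using assms by (simp add: distr_gauss_mat_component cong: PiM_cong) (simp add: gauss_mat_def)
    also have "\<dots> = (\<Pi>\<^sub>M p\<in>{..<nr} \<times> {..<nc}. distr (gauss_mat nr nc s) borel (\<lambda>W. W p))"
      by (intro PiM_cong refl distr_cong) auto
    finally show ?thesis
      using False measurable_gauss_mat_component by (subst indep_vars_iff_distr_eq_PiM') auto
  qed
qed

lemma distr_gauss_mat_component_gauss:
  assumes "p \<in> {..<nr} \<times> {..<nc}" "0 < s"
  shows "distr (gauss_mat nr nc s) lborel (\<lambda>W. W p) = gauss (s\<^sup>2)"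
  using assms by (simp add: distr_gauss_mat_component gauss_def)

lemma gauss_mat_component_moments:
  assumes p: "p \<in> {..<nr} \<times> {..<nc}" and q: "q \<in> {..<nr} \<times> {..<nc}" and "0 < s"
  shows "has_bochner_integral (gauss_mat nr nc s) (\<lambda>W. W p) 0"
    and "has_bochner_integral (gauss_mat nr nc s) (\<lambda>W. W p * W q) (if p = q then s\<^sup>2 else 0)"
proof -
  interpret prob_space "gauss_mat nr nc s" by (rule prob_space_gauss_mat) fact
  have meas: "(\<lambda>W. W i) \<in> measurable (gauss_mat nr nc s) lborel" if "i \<in> {..<nr} \<times> {..<nc}" for i
    using measurable_gauss_mat_component[OF that] by simp
  have mean: "has_bochner_integral (gauss_mat nr nc s) (\<lambda>W. W i) 0" if "i \<in> {..<nr} \<times> {..<nc}" for i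
    using has_bochner_integral_distrD[OF meas[OF that], of "\<lambda>x. x"]
      distr_gauss_mat_component_gauss[OF that \<open>0 < s\<close>] gauss_first_moment[of "s\<^sup>2"]
    by simp
  then show "has_bochner_integral (gauss_mat nr nc s) (\<lambda>W. W p) 0" using p .
  show "has_bochner_integral (gauss_mat nr nc s) (\<lambda>W. W p * W q) (if p = q then s\<^sup>2 else 0)"
  proof (cases "p = q")
    case True
    then show ?thesis
      using has_bochner_integral_distrD[OF meas[OF p], of "\<lambda>x. x\<^sup>2"]
        distr_gauss_mat_component_gauss[OF p \<open>0 < s\<close>] gauss_second_moment[of "s\<^sup>2"]
      by (simp add: power2_eq_square)
  next
    case False
    have indep: "indep_vars (\<lambda>_. borel) (\<lambda>i W. W i) {p, q}"
      using indep_vars_subset[OF indep_vars_gauss_mat_components[OF \<open>0 < s\<close>]] p q by auto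
    have int: "integrable (gauss_mat nr nc s) (\<lambda>W. W i)" if "i \<in> {p, q}" for i
      using mean that p q by (auto simp: has_bochner_integral_iff)
    have "(\<integral>W. W i \<partial>gauss_mat nr nc s) = 0" if "i \<in> {p, q}" for i
      using mean that p q by (auto simp: has_bochner_integral_iff)
    then have "has_bochner_integral (gauss_mat nr nc s) (\<lambda>W. \<Prod>i\<in>{p, q}. W i) 0"
      using indep_vars_lebesgue_integral[OF _ indep int] indep_vars_integrable[OF _ indep int] False
      by (simp add: has_bochner_integral_iff)
    with False show ?thesis by simp
  qed
qed

lemma distr_gauss_mat_linear_combination:
  assumes "0 < s" "J \<subseteq> {..<nr} \<times> {..<nc}"
  shows "distr (gauss_mat nr nc s) lborel (\<lambda>W. \<Sum>p\<in>J. a p * W p) = gauss (s\<^sup>2 * (\<Sum>p\<in>J. (a p)\<^sup>2))"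
proof -
  interpret prob_space "gauss_mat nr nc s" by (rule prob_space_gauss_mat) fact
  \<comment> \<open>\<open>sum_indep_normal\<close> needs positive standard deviations, so zero coefficients are dropped.\<close>
  define S where "S = {p \<in> J. a p \<noteq> 0}"
  have J: "finite J" using assms(2) by (rule finite_subset) simp
  have S: "finite S" "S \<subseteq> {..<nr} \<times> {..<nc}"
    using assms(2) J by (auto simp: S_def)
  have support: "(\<Sum>p\<in>J. a p * W p) = (\<Sum>p\<in>S. a p * W p)" "(\<Sum>p\<in>J. (a p)\<^sup>2) = (\<Sum>p\<in>S. (a p)\<^sup>2)"
    for W :: rmat
    using J by (auto intro!: sum.mono_neutral_right simp: S_def)
  show ?thesis
  proof (cases "S = {}")
    case True
    then show ?thesis by (simp add: support gauss_def)
  next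
    case False
    have "indep_vars (\<lambda>_. borel) (\<lambda>p W. W p) S"
      by (rule indep_vars_subset[OF indep_vars_gauss_mat_components[OF \<open>0 < s\<close>] S(2)])
    then have indep: "indep_vars (\<lambda>_. borel) (\<lambda>p W. a p * W p) S"
      by (rule indep_vars_compose2[where Y="\<lambda>p x. a p * x"]) simp
    have pos: "0 < \<bar>a p\<bar> * s" if "p \<in> S" for p
      using that \<open>0 < s\<close> by (auto simp: S_def)
    have law: "distributed (gauss_mat nr nc s) lborel (\<lambda>W. a p * W p) (normal_density 0 (\<bar>a p\<bar> * s))"
      if "p \<in> S" for p
    proof -
      have "distributed (gauss_mat nr nc s) lborel (\<lambda>W. W p) (normal_density 0 s)"
        using distr_gauss_mat_component[of p nr nc s] measurable_gauss_mat_component[of p nr nc s]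
          that S(2) \<open>0 < s\<close> by (auto simp: distributed_def)
      moreover have "a p \<noteq> 0" using that by (auto simp: S_def)
      ultimately show ?thesis
        using normal_density_affine[OF _ \<open>0 < s\<close>, of "\<lambda>W. W p" 0 "a p" 0] by simp
    qed
    have var: "s\<^sup>2 * (\<Sum>p\<in>S. (a p)\<^sup>2) = (\<Sum>p\<in>S. (\<bar>a p\<bar> * s)\<^sup>2)"
      by (simp add: sum_distrib_left power_mult_distrib mult.commute)
    have "distributed (gauss_mat nr nc s) lborel (\<lambda>W. \<Sum>p\<in>S. a p * W p)
        (normal_density 0 (sqrt (s\<^sup>2 * (\<Sum>p\<in>S. (a p)\<^sup>2))))"
      using sum_indep_normal[OF S(1) False indep pos law] by (simp add: var)
    moreover have "0 < s\<^sup>2 * (\<Sum>p\<in>S. (a p)\<^sup>2)"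
      unfolding var using pos by (intro sum_pos S(1) False) (meson zero_less_power)
    ultimately show ?thesis
      by (auto simp: support distributed_def gauss_def)
  qed
qed

lemma distr_gauss_mat_row_dot:
  assumes "0 < s" "j < nr"
  shows "distr (gauss_mat nr nc s) lborel (\<lambda>W. \<Sum>l<nc. W (j, l) * h l)
           = gauss (s\<^sup>2 * (\<Sum>l<nc. (h l)\<^sup>2))"
proof -
  have row: "Pair j ` {..<nc} \<subseteq> {..<nr} \<times> {..<nc}"
    using assms(2) by auto
  have "(\<Sum>p\<in>Pair j ` {..<nc}. g p) = (\<Sum>l<nc. g (j, l))" for g :: "nat \<times> nat \<Rightarrow> real"
    by (simp add: sum.reindex inj_on_def)
  then show ?thesis
    using distr_gauss_mat_linear_combination[OF assms(1) row, where a="\<lambda>p. h (snd p)"]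
    by (simp add: mult.commute)
qed

lemma measurable_gauss_mat_row_dot [measurable]:
  "j < nr \<Longrightarrow> (\<lambda>W. \<Sum>l<nc. W (j, l) * h l) \<in> borel_measurable (gauss_mat nr nc s)"
  by (intro borel_measurable_sum borel_measurable_times measurable_gauss_mat_component borel_measurable_const)
     auto

lemma has_bochner_integral_gauss_mat_row_dot:
  fixes f :: "real \<Rightarrow> real"
  assumes "0 < s" "j < nr" "has_bochner_integral (gauss (s\<^sup>2 * (\<Sum>l<nc. (h l)\<^sup>2))) f y"
  shows "has_bochner_integral (gauss_mat nr nc s) (\<lambda>W. f (\<Sum>l<nc. W (j, l) * h l)) y"
proof -
  have "(\<lambda>W. \<Sum>l<nc. W (j, l) * h l) \<in> measurable (gauss_mat nr nc s) lborel"
    using measurable_gauss_mat_row_dot[OF assms(2)] by simp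
  moreover have "has_bochner_integral (distr (gauss_mat nr nc s) lborel (\<lambda>W. \<Sum>l<nc. W (j, l) * h l)) f y"
    using assms by (simp add: distr_gauss_mat_row_dot)
  ultimately show ?thesis
    by (rule has_bochner_integral_distrD)
qed

section \<open>Random Gaussian readouts\<close>

lemma frob_sq_proj_rows_add:
  "frob_sq n d (proj_rows d P (\<lambda>k a. H k a + F k a))
     = frob_sq n d (proj_rows d P H) + 2 * frob_inner n d (proj_rows d P H) (proj_rows d P F)
       + frob_sq n d (proj_rows d P F)"
proof -
  have "proj_rows d P (\<lambda>k a. H k a + F k a) k a = proj_rows d P H k a + proj_rows d P F k a" for k a
    by (simp add: proj_rows_def distrib_right sum.distrib)
  then show ?thesis
    by (simp add: frob_sq_def frob_inner_def power2_sum sum.distrib sum_distrib_left mult.assoc)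
qed

lemma has_bochner_integral_frob_sq_proj_rows_add:
  assumes "prob_space N"
    and "has_bochner_integral N (\<lambda>w. frob_inner n d (proj_rows d P H) (proj_rows d P (F w))) 0"
    and "has_bochner_integral N (\<lambda>w. frob_sq n d (proj_rows d P (F w))) A"
  shows "has_bochner_integral N (\<lambda>w. frob_sq n d (proj_rows d P (\<lambda>k a. H k a + F w k a)))
           (frob_sq n d (proj_rows d P H) + A)"
proof -
  interpret prob_space N by fact
  have "has_bochner_integral N (\<lambda>w. frob_sq n d (proj_rows d P H)
      + 2 * frob_inner n d (proj_rows d P H) (proj_rows d P (F w)) + frob_sq n d (proj_rows d P (F w)))
      (frob_sq n d (proj_rows d P H) + 2 * 0 + A)"
    using assms(2,3) prob_space
    by (intro has_bochner_integral_add has_bochner_integral_mult_right) (auto simp: has_bochner_integral_iff)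
  then show ?thesis by (simp add: frob_sq_proj_rows_add)
qed

lemma proj_rows_readout:
  "proj_rows d P (\<lambda>k a. \<Sum>j<m. W (a, j) * y j k) k a
     = (\<Sum>p\<in>{..<d} \<times> {..<m}. P (fst p) a * (y (snd p) k * W p))"
proof -
  have "proj_rows d P (\<lambda>k a. \<Sum>j<m. W (a, j) * y j k) k a = (\<Sum>l<d. \<Sum>j<m. P l a * (y j k * W (l, j)))"
    by (simp add: proj_rows_def sum_distrib_left sum_distrib_right mult_ac)
  then show ?thesis
    by (simp add: sum.cartesian_product')
qed

lemma readout_entry_moments:
  fixes f :: "'h \<Rightarrow> real"
  assumes Q: "prob_space Q" and "0 < \<tau>" and p: "p \<in> {..<d} \<times> {..<m}" and q: "q \<in> {..<d} \<times> {..<m}"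
    and f: "integrable Q f"
  shows "has_bochner_integral (Q \<Otimes>\<^sub>M gauss_mat d m \<tau>) (\<lambda>x. f (fst x) * snd x p) 0"
    and "has_bochner_integral (Q \<Otimes>\<^sub>M gauss_mat d m \<tau>) (\<lambda>x. f (fst x) * (snd x p * snd x q))
           (if p = q then \<tau>\<^sup>2 * (\<integral>h. f h \<partial>Q) else 0)"
proof -
  have G: "prob_space (gauss_mat d m \<tau>)" using \<open>0 < \<tau>\<close> by (rule prob_space_gauss_mat)
  note W = gauss_mat_component_moments[OF p q \<open>0 < \<tau>\<close>]
  show "has_bochner_integral (Q \<Otimes>\<^sub>M gauss_mat d m \<tau>) (\<lambda>x. f (fst x) * snd x p) 0"
    using has_bochner_integral_pair_measure_mult[OF Q G f integrable.intros[OF W(1)]]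
    by (simp add: has_bochner_integral_integral_eq[OF W(1)])
  show "has_bochner_integral (Q \<Otimes>\<^sub>M gauss_mat d m \<tau>) (\<lambda>x. f (fst x) * (snd x p * snd x q))
      (if p = q then \<tau>\<^sup>2 * (\<integral>h. f h \<partial>Q) else 0)"
    using has_bochner_integral_pair_measure_mult[OF Q G f integrable.intros[OF W(2)]]
    unfolding has_bochner_integral_integral_eq[OF W(2)] by (cases "p = q") (simp_all add: mult.commute)
qed

lemma readout_energy:
  fixes Q :: "'h measure" and Y :: "nat \<Rightarrow> nat \<Rightarrow> 'h \<Rightarrow> real" and H P :: "nat \<Rightarrow> nat \<Rightarrow> real"
  assumes Q: "prob_space Q" and "0 < \<tau>"
    and Y_meas: "\<And>j k. j < m \<Longrightarrow> k < n \<Longrightarrow> Y j k \<in> borel_measurable Q"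
    and Y_var: "\<And>j k. j < m \<Longrightarrow> k < n \<Longrightarrow> has_bochner_integral Q (\<lambda>h. (Y j k h)\<^sup>2) V"
  defines "F \<equiv> \<lambda>h W k a. \<Sum>j<m. W (a, j) * Y j k h"
  shows "has_bochner_integral (Q \<Otimes>\<^sub>M gauss_mat d m \<tau>)
           (\<lambda>(h, W). frob_inner n d (proj_rows d P H) (proj_rows d P (F h W))) 0"
    and "has_bochner_integral (Q \<Otimes>\<^sub>M gauss_mat d m \<tau>)
           (\<lambda>(h, W). frob_sq n d (proj_rows d P (F h W)))
           (real n * real m * \<tau>\<^sup>2 * V * (\<Sum>a<d. \<Sum>l<d. (P l a)\<^sup>2))"
    and "has_bochner_integral (Q \<Otimes>\<^sub>M gauss_mat d m \<tau>)
           (\<lambda>(h, W). frob_sq n d (proj_rows d P (\<lambda>k a. H k a + F h W k a)))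
           (frob_sq n d (proj_rows d P H) + real n * real m * \<tau>\<^sup>2 * V * (\<Sum>a<d. \<Sum>l<d. (P l a)\<^sup>2))"
proof -
  interpret Q: prob_space Q by fact
  let ?I = "{..<d} \<times> {..<m}" and ?N = "Q \<Otimes>\<^sub>M gauss_mat d m \<tau>"
  have Y_sq: "integrable Q (\<lambda>h. (Y j k h)\<^sup>2)" if "j < m" "k < n" for j k
    using Y_var[OF that] by (rule integrable.intros)
  have proj_F: "proj_rows d P (F h W) k a = (\<Sum>p\<in>?I. P (fst p) a * (Y (snd p) k h * W p))" for h W k a
    unfolding F_def by (rule proj_rows_readout)
  have first: "has_bochner_integral ?N (\<lambda>x. Y (snd p) k (fst x) * snd x p) 0"
    if "p \<in> ?I" "k < n" for p k
    using that Q.square_integrable_imp_integrable[OF Y_meas Y_sq, of "snd p" k]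
    by (intro readout_entry_moments(1)[OF Q \<open>0 < \<tau>\<close> that(1) that(1)]) auto
  have "has_bochner_integral ?N
      (\<lambda>x. \<Sum>k<n. \<Sum>a<d. \<Sum>p\<in>?I. (proj_rows d P H k a * P (fst p) a) * (Y (snd p) k (fst x) * snd x p))
      (\<Sum>k<n. \<Sum>a<d. \<Sum>p\<in>?I. (proj_rows d P H k a * P (fst p) a) * 0)"
    by (intro has_bochner_integral_sum has_bochner_integral_mult_right first) auto
  then show inner: "has_bochner_integral ?N (\<lambda>(h, W). frob_inner n d (proj_rows d P H) (proj_rows d P (F h W))) 0"
    by (simp add: split_beta' frob_inner_def proj_F sum_distrib_left mult_ac)
  have second: "has_bochner_integral ?N
      (\<lambda>x. (Y (snd p) k (fst x) * Y (snd q) k (fst x)) * (snd x p * snd x q)) (if p = q then V * \<tau>\<^sup>2 else 0)"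
    if "p \<in> ?I" "q \<in> ?I" "k < n" for p q k
  proof -
    have "integrable Q (\<lambda>h. Y (snd p) k h * Y (snd q) k h)"
      using that by (intro integrable_mult_of_square_integrable Y_meas Y_sq) auto
    from readout_entry_moments(2)[OF Q \<open>0 < \<tau>\<close> that(1,2) this]
    show ?thesis
      using that Y_var[of "snd p" k] by (auto simp: has_bochner_integral_iff power2_eq_square)
  qed
  have "has_bochner_integral ?N
      (\<lambda>x. \<Sum>k<n. \<Sum>a<d. \<Sum>p\<in>?I. \<Sum>q\<in>?I. (P (fst p) a * P (fst q) a) *
         ((Y (snd p) k (fst x) * Y (snd q) k (fst x)) * (snd x p * snd x q)))
      (\<Sum>k<n. \<Sum>a<d. \<Sum>p\<in>?I. \<Sum>q\<in>?I. (P (fst p) a * P (fst q) a) * (if p = q then V * \<tau>\<^sup>2 else 0))"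
    by (intro has_bochner_integral_sum has_bochner_integral_mult_right second) auto
  moreover have "(\<Sum>k<n. \<Sum>a<d. \<Sum>p\<in>?I. \<Sum>q\<in>?I. (P (fst p) a * P (fst q) a) * (if p = q then V * \<tau>\<^sup>2 else 0))
      = real n * real m * \<tau>\<^sup>2 * V * (\<Sum>a<d. \<Sum>l<d. (P l a)\<^sup>2)"
    by (simp add: if_distrib[of "\<lambda>x. _ * x"] sum.delta cong: if_cong)
       (simp add: sum.cartesian_product' sum_distrib_left power2_eq_square mult_ac)
  moreover have "frob_sq n d (proj_rows d P (F h W)) = (\<Sum>k<n. \<Sum>a<d. \<Sum>p\<in>?I. \<Sum>q\<in>?I.
      (P (fst p) a * P (fst q) a) * ((Y (snd p) k h * Y (snd q) k h) * (W p * W q)))" for h W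
    by (simp add: frob_sq_def proj_F power2_eq_square sum_product mult_ac)
  ultimately show energy: "has_bochner_integral ?N (\<lambda>(h, W). frob_sq n d (proj_rows d P (F h W)))
      (real n * real m * \<tau>\<^sup>2 * V * (\<Sum>a<d. \<Sum>l<d. (P l a)\<^sup>2))"
    by (simp only: split_beta')
  from has_bochner_integral_frob_sq_proj_rows_add[OF prob_space_pair[OF Q prob_space_gauss_mat[OF \<open>0 < \<tau>\<close>]],
      where F="\<lambda>x. F (fst x) (snd x)"]
  show "has_bochner_integral ?N (\<lambda>(h, W). frob_sq n d (proj_rows d P (\<lambda>k a. H k a + F h W k a)))
      (frob_sq n d (proj_rows d P H) + real n * real m * \<tau>\<^sup>2 * V * (\<Sum>a<d. \<Sum>l<d. (P l a)\<^sup>2))"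
    using inner energy by (simp add: split_beta')
qed

section \<open>The two feed-forward sublayers\<close>

lemma distr_weights_single:
  assumes "0 < \<sigma>" "0 < \<tau>s" "0 < \<tau>g"
  shows "distr (weights d m r \<sigma> \<tau>s \<tau>g) (gauss_mat m d \<sigma> \<Otimes>\<^sub>M gauss_mat d m \<tau>s)
           (\<lambda>(Wi, Wg, Wu, Wo, Wot). (Wi, Wo)) = gauss_mat m d \<sigma> \<Otimes>\<^sub>M gauss_mat d m \<tau>s"
proof -
  let ?Mi = "gauss_mat m d \<sigma>" and ?Mg = "gauss_mat r d \<sigma>" and ?Mo = "gauss_mat d m \<tau>s"
    and ?Mt = "gauss_mat d r \<tau>g"
  have P: "prob_space ?Mi" "prob_space ?Mg" "prob_space ?Mo" "prob_space ?Mt"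
    using assms by (auto intro: prob_space_gauss_mat)
  have Wo_law: "distr (?Mg \<Otimes>\<^sub>M (?Mg \<Otimes>\<^sub>M (?Mo \<Otimes>\<^sub>M ?Mt))) ?Mo (\<lambda>y. fst (snd (snd y))) = ?Mo"
  proof -
    have "distr (?Mg \<Otimes>\<^sub>M (?Mg \<Otimes>\<^sub>M (?Mo \<Otimes>\<^sub>M ?Mt))) ?Mo (\<lambda>y. fst (snd (snd y)))
        = distr (distr (distr (?Mg \<Otimes>\<^sub>M (?Mg \<Otimes>\<^sub>M (?Mo \<Otimes>\<^sub>M ?Mt))) (?Mg \<Otimes>\<^sub>M (?Mo \<Otimes>\<^sub>M ?Mt)) snd)
            (?Mo \<Otimes>\<^sub>M ?Mt) snd) ?Mo fst"
      by (simp add: distr_distr comp_def)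
    also have "\<dots> = ?Mo"
      using P by (simp add: distr_pair_snd prob_space_pair prob_space.distr_pair_fst prob_space_imp_sigma_finite)
    finally show ?thesis .
  qed
  have map_eq: "(\<lambda>(Wi, Wg, Wu, Wo, Wot). (Wi, Wo)) = (\<lambda>(x, y). (x, fst (snd (snd y))))"
    by auto
  show ?thesis
    unfolding map_eq weights_def
    by (rule distr_pair_measure_map_snd) (use P Wo_law in \<open>auto intro: prob_space_imp_sigma_finite\<close>)
qed

lemma distr_weights_gate:
  assumes "0 < \<sigma>" "0 < \<tau>s" "0 < \<tau>g"
  shows "distr (weights d m r \<sigma> \<tau>s \<tau>g) ((gauss_mat r d \<sigma> \<Otimes>\<^sub>M gauss_mat r d \<sigma>) \<Otimes>\<^sub>M gauss_mat d r \<tau>g)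
           (\<lambda>(Wi, Wg, Wu, Wo, Wot). ((Wg, Wu), Wot))
         = (gauss_mat r d \<sigma> \<Otimes>\<^sub>M gauss_mat r d \<sigma>) \<Otimes>\<^sub>M gauss_mat d r \<tau>g"
proof -
  let ?Mg = "gauss_mat r d \<sigma>" and ?Mo = "gauss_mat d m \<tau>s" and ?Mt = "gauss_mat d r \<tau>g"
  have P: "prob_space ?Mg" "prob_space ?Mo" "prob_space ?Mt"
    using assms by (auto intro: prob_space_gauss_mat)
  then have S: "sigma_finite_measure ?Mg" "sigma_finite_measure ?Mt"
    by (auto intro: prob_space_imp_sigma_finite)
  have drop_Wo: "distr (?Mg \<Otimes>\<^sub>M (?Mo \<Otimes>\<^sub>M ?Mt)) (?Mg \<Otimes>\<^sub>M ?Mt) (\<lambda>(u, z). (u, snd z)) = ?Mg \<Otimes>\<^sub>M ?Mt"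
    by (rule distr_pair_measure_map_snd) (use S distr_pair_snd[OF P(2) S(2)] in auto)
  have drop_Wo': "distr (?Mg \<Otimes>\<^sub>M (?Mg \<Otimes>\<^sub>M (?Mo \<Otimes>\<^sub>M ?Mt))) (?Mg \<Otimes>\<^sub>M (?Mg \<Otimes>\<^sub>M ?Mt))
      (\<lambda>(x, y). (x, (\<lambda>(u, z). (u, snd z)) y)) = ?Mg \<Otimes>\<^sub>M (?Mg \<Otimes>\<^sub>M ?Mt)"
    by (rule distr_pair_measure_map_snd) (use S drop_Wo in \<open>auto intro: sigma_finite_pair_measure\<close>)
  have map_eq: "(\<lambda>(Wi, Wg, Wu, Wo, Wot). ((Wg, Wu), Wot))
      = (\<lambda>(x, y, z). ((x, y), z)) \<circ> ((\<lambda>(x, y). (x, (\<lambda>(u, z). (u, snd z)) y)) \<circ> snd)"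
    by auto
  have "distr (weights d m r \<sigma> \<tau>s \<tau>g) ((?Mg \<Otimes>\<^sub>M ?Mg) \<Otimes>\<^sub>M ?Mt) (\<lambda>(Wi, Wg, Wu, Wo, Wot). ((Wg, Wu), Wot))
      = distr (distr (distr (weights d m r \<sigma> \<tau>s \<tau>g) (?Mg \<Otimes>\<^sub>M (?Mg \<Otimes>\<^sub>M (?Mo \<Otimes>\<^sub>M ?Mt))) snd)
          (?Mg \<Otimes>\<^sub>M (?Mg \<Otimes>\<^sub>M ?Mt)) (\<lambda>(x, y). (x, (\<lambda>(u, z). (u, snd z)) y)))
          ((?Mg \<Otimes>\<^sub>M ?Mg) \<Otimes>\<^sub>M ?Mt) (\<lambda>(x, y, z). ((x, y), z))"
    unfolding map_eq weights_def by (simp add: distr_distr)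
  also have "\<dots> = (?Mg \<Otimes>\<^sub>M ?Mg) \<Otimes>\<^sub>M ?Mt"
    using P S assms unfolding weights_def
    by (simp add: distr_pair_snd drop_Wo' distr_pair_measure_assoc sigma_finite_pair_measure prob_space_pair
        prob_space_imp_sigma_finite prob_space_gauss_mat)
  finally show ?thesis .
qed

lemma has_bochner_integral_weights_single:
  fixes f :: "rmat \<Rightarrow> rmat \<Rightarrow> real"
  assumes "0 < \<sigma>" "0 < \<tau>s" "0 < \<tau>g"
    and "has_bochner_integral (gauss_mat m d \<sigma> \<Otimes>\<^sub>M gauss_mat d m \<tau>s) (\<lambda>(Wi, Wo). f Wi Wo) y"
  shows "has_bochner_integral (weights d m r \<sigma> \<tau>s \<tau>g) (\<lambda>(Wi, Wg, Wu, Wo, Wot). f Wi Wo) y"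
proof -
  have eq: "(\<lambda>(Wi, Wg, Wu, Wo, Wot). f Wi Wo)
      = (\<lambda>w. (\<lambda>(Wi, Wo). f Wi Wo) ((\<lambda>(Wi, Wg, Wu, Wo, Wot). (Wi, Wo)) w))"
    by auto
  have "(\<lambda>(Wi, Wg, Wu, Wo, Wot). (Wi, Wo))
      \<in> measurable (weights d m r \<sigma> \<tau>s \<tau>g) (gauss_mat m d \<sigma> \<Otimes>\<^sub>M gauss_mat d m \<tau>s)"
    by (simp add: weights_def)
  from has_bochner_integral_distrD[OF this, unfolded distr_weights_single[OF assms(1-3)], OF assms(4)]
  show ?thesis
    unfolding eq .
qed

lemma has_bochner_integral_weights_gate:
  fixes f :: "rmat \<Rightarrow> rmat \<Rightarrow> rmat \<Rightarrow> real"
  assumes "0 < \<sigma>" "0 < \<tau>s" "0 < \<tau>g"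
    and "has_bochner_integral ((gauss_mat r d \<sigma> \<Otimes>\<^sub>M gauss_mat r d \<sigma>) \<Otimes>\<^sub>M gauss_mat d r \<tau>g)
           (\<lambda>((Wg, Wu), Wot). f Wg Wu Wot) y"
  shows "has_bochner_integral (weights d m r \<sigma> \<tau>s \<tau>g) (\<lambda>(Wi, Wg, Wu, Wo, Wot). f Wg Wu Wot) y"
proof -
  have eq: "(\<lambda>(Wi, Wg, Wu, Wo, Wot). f Wg Wu Wot)
      = (\<lambda>w. (\<lambda>((Wg, Wu), Wot). f Wg Wu Wot) ((\<lambda>(Wi, Wg, Wu, Wo, Wot). ((Wg, Wu), Wot)) w))"
    by auto
  have "(\<lambda>(Wi, Wg, Wu, Wo, Wot). ((Wg, Wu), Wot))
      \<in> measurable (weights d m r \<sigma> \<tau>s \<tau>g) ((gauss_mat r d \<sigma> \<Otimes>\<^sub>M gauss_mat r d \<sigma>) \<Otimes>\<^sub>M gauss_mat d r \<tau>g)"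
    by (simp add: weights_def)
  from has_bochner_integral_distrD[OF this, unfolded distr_weights_gate[OF assms(1-3)], OF assms(4)]
  show ?thesis
    unfolding eq .
qed

lemma single_energy:
  fixes \<phi> :: "real \<Rightarrow> real" and H P :: "nat \<Rightarrow> nat \<Rightarrow> real"
  assumes pos: "0 < \<sigma>" "0 < \<tau>s" "0 < \<tau>g"
    and \<phi>: "\<phi> \<in> borel_measurable borel" "has_bochner_integral (gauss (\<sigma>\<^sup>2 * c\<^sup>2)) (\<lambda>x. (\<phi> x)\<^sup>2) E\<phi>"
    and rows: "\<forall>k<n. (\<Sum>l<d. (H k l)\<^sup>2) = c\<^sup>2"
  shows "has_bochner_integral (weights d m r \<sigma> \<tau>s \<tau>g) (\<lambda>(Wi, Wg, Wu, Wo, Wot).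
           frob_inner n d (proj_rows d P H) (proj_rows d P (F_single d m \<phi> Wi Wo H))) 0"
    and "has_bochner_integral (weights d m r \<sigma> \<tau>s \<tau>g) (\<lambda>(Wi, Wg, Wu, Wo, Wot).
           frob_sq n d (proj_rows d P (F_single d m \<phi> Wi Wo H)))
           (real n * real m * \<tau>s\<^sup>2 * E\<phi> * (\<Sum>a<d. \<Sum>l<d. (P l a)\<^sup>2))"
    and "has_bochner_integral (weights d m r \<sigma> \<tau>s \<tau>g) (\<lambda>(Wi, Wg, Wu, Wo, Wot).
           frob_sq n d (proj_rows d P (\<lambda>k a. H k a + F_single d m \<phi> Wi Wo H k a)))
           (frob_sq n d (proj_rows d P H) + real n * real m * \<tau>s\<^sup>2 * E\<phi> * (\<Sum>a<d. \<Sum>l<d. (P l a)\<^sup>2))"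
proof -
  define Y where "Y j k Wi = \<phi> (\<Sum>l<d. Wi (j, l) * H k l)" for j k and Wi :: rmat
  have F_eq: "F_single d m \<phi> Wi Wo H = (\<lambda>k a. \<Sum>j<m. Wo (a, j) * Y j k Wi)" for Wi Wo
    by (simp add: fun_eq_iff F_single_def Y_def)
  have Y_meas: "Y j k \<in> borel_measurable (gauss_mat m d \<sigma>)" if "j < m" for j k
    unfolding Y_def using that \<phi>(1) by measurable
  have Y_var: "has_bochner_integral (gauss_mat m d \<sigma>) (\<lambda>Wi. (Y j k Wi)\<^sup>2) E\<phi>"
    if "j < m" "k < n" for j k
    unfolding Y_def using \<phi>(2) rows that(2)
    by (intro has_bochner_integral_gauss_mat_row_dot[OF pos(1) that(1), where f="\<lambda>x. (\<phi> x)\<^sup>2"]) simp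
  note R = readout_energy[OF prob_space_gauss_mat[OF pos(1)] pos(2) Y_meas Y_var]
  show "has_bochner_integral (weights d m r \<sigma> \<tau>s \<tau>g) (\<lambda>(Wi, Wg, Wu, Wo, Wot).
      frob_inner n d (proj_rows d P H) (proj_rows d P (F_single d m \<phi> Wi Wo H))) 0"
    using R(1) by (intro has_bochner_integral_weights_single pos) (simp add: F_eq)
  show "has_bochner_integral (weights d m r \<sigma> \<tau>s \<tau>g) (\<lambda>(Wi, Wg, Wu, Wo, Wot).
      frob_sq n d (proj_rows d P (F_single d m \<phi> Wi Wo H)))
      (real n * real m * \<tau>s\<^sup>2 * E\<phi> * (\<Sum>a<d. \<Sum>l<d. (P l a)\<^sup>2))"
    using R(2) by (intro has_bochner_integral_weights_single pos) (simp add: F_eq)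
  show "has_bochner_integral (weights d m r \<sigma> \<tau>s \<tau>g) (\<lambda>(Wi, Wg, Wu, Wo, Wot).
      frob_sq n d (proj_rows d P (\<lambda>k a. H k a + F_single d m \<phi> Wi Wo H k a)))
      (frob_sq n d (proj_rows d P H) + real n * real m * \<tau>s\<^sup>2 * E\<phi> * (\<Sum>a<d. \<Sum>l<d. (P l a)\<^sup>2))"
    using R(3) by (intro has_bochner_integral_weights_single pos) (simp add: F_eq)
qed

lemma gate_energy:
  fixes \<psi> :: "real \<Rightarrow> real" and H P :: "nat \<Rightarrow> nat \<Rightarrow> real"
  assumes pos: "0 < \<sigma>" "0 < \<tau>s" "0 < \<tau>g"
    and \<psi>: "\<psi> \<in> borel_measurable borel" "has_bochner_integral (gauss (\<sigma>\<^sup>2 * c\<^sup>2)) (\<lambda>x. (\<psi> x)\<^sup>2) E\<psi>"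
    and rows: "\<forall>k<n. (\<Sum>l<d. (H k l)\<^sup>2) = c\<^sup>2"
  shows "has_bochner_integral (weights d m r \<sigma> \<tau>s \<tau>g) (\<lambda>(Wi, Wg, Wu, Wo, Wot).
           frob_inner n d (proj_rows d P H) (proj_rows d P (F_gate d r \<psi> Wg Wu Wot H))) 0"
    and "has_bochner_integral (weights d m r \<sigma> \<tau>s \<tau>g) (\<lambda>(Wi, Wg, Wu, Wo, Wot).
           frob_sq n d (proj_rows d P (\<lambda>k a. H k a + F_gate d r \<psi> Wg Wu Wot H k a)))
           (frob_sq n d (proj_rows d P H)
             + real n * real r * \<tau>g\<^sup>2 * (\<sigma>\<^sup>2 * c\<^sup>2 * E\<psi>) * (\<Sum>a<d. \<Sum>l<d. (P l a)\<^sup>2))"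
proof -
  let ?Mg = "gauss_mat r d \<sigma>"
  define Y where "Y j k h = \<psi> (\<Sum>l<d. fst h (j, l) * H k l) * (\<Sum>l<d. snd h (j, l) * H k l)"
    for j k and h :: "rmat \<times> rmat"
  have F_eq: "F_gate d r \<psi> Wg Wu Wot H = (\<lambda>k a. \<Sum>j<r. Wot (a, j) * Y j k (Wg, Wu))" for Wg Wu Wot
    by (simp add: fun_eq_iff F_gate_def Y_def)
  have to_weights: "has_bochner_integral (weights d m r \<sigma> \<tau>s \<tau>g) (\<lambda>(Wi, Wg, Wu, Wo, Wot). G (Wg, Wu) Wot) y"
    if "has_bochner_integral ((?Mg \<Otimes>\<^sub>M ?Mg) \<Otimes>\<^sub>M gauss_mat d r \<tau>g) (\<lambda>(h, Wot). G h Wot) y"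
    for G :: "rmat \<times> rmat \<Rightarrow> rmat \<Rightarrow> real" and y
    using that by (intro has_bochner_integral_weights_gate pos) (simp add: split_beta')
  have Y_meas: "Y j k \<in> borel_measurable (?Mg \<Otimes>\<^sub>M ?Mg)" if "j < r" for j k
    unfolding Y_def using that \<psi>(1) by measurable
  have Y_var: "has_bochner_integral (?Mg \<Otimes>\<^sub>M ?Mg) (\<lambda>h. (Y j k h)\<^sup>2) (E\<psi> * (\<sigma>\<^sup>2 * c\<^sup>2))"
    if "j < r" "k < n" for j k
  proof -
    have gate: "has_bochner_integral ?Mg (\<lambda>W. (\<psi> (\<Sum>l<d. W (j, l) * H k l))\<^sup>2) E\<psi>"
      using \<psi>(2) rows that(2)
      by (intro has_bochner_integral_gauss_mat_row_dot[OF pos(1) that(1), where f="\<lambda>x. (\<psi> x)\<^sup>2"]) simp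
    have up: "has_bochner_integral ?Mg (\<lambda>W. (\<Sum>l<d. W (j, l) * H k l)\<^sup>2) (\<sigma>\<^sup>2 * c\<^sup>2)"
      using gauss_second_moment[of "\<sigma>\<^sup>2 * c\<^sup>2"] rows that(2)
      by (intro has_bochner_integral_gauss_mat_row_dot[OF pos(1) that(1), where f="\<lambda>x. x\<^sup>2"]) simp
    from has_bochner_integral_pair_measure_mult[OF prob_space_gauss_mat[OF pos(1)]
        prob_space_gauss_mat[OF pos(1)] integrable.intros[OF gate] integrable.intros[OF up]]
    show ?thesis
      using gate up by (simp add: Y_def has_bochner_integral_iff power_mult_distrib)
  qed
  note R = readout_energy[where m=r and n=n and Y=Y,
      OF prob_space_pair[OF prob_space_gauss_mat[OF pos(1)] prob_space_gauss_mat[OF pos(1)]] pos(3) Y_meas Y_var]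
  show "has_bochner_integral (weights d m r \<sigma> \<tau>s \<tau>g) (\<lambda>(Wi, Wg, Wu, Wo, Wot).
      frob_inner n d (proj_rows d P H) (proj_rows d P (F_gate d r \<psi> Wg Wu Wot H))) 0"
    unfolding F_eq by (rule to_weights[OF R(1)])
  show "has_bochner_integral (weights d m r \<sigma> \<tau>s \<tau>g) (\<lambda>(Wi, Wg, Wu, Wo, Wot).
      frob_sq n d (proj_rows d P (\<lambda>k a. H k a + F_gate d r \<psi> Wg Wu Wot H k a)))
      (frob_sq n d (proj_rows d P H)
        + real n * real r * \<tau>g\<^sup>2 * (\<sigma>\<^sup>2 * c\<^sup>2 * E\<psi>) * (\<Sum>a<d. \<Sum>l<d. (P l a)\<^sup>2))"
    unfolding F_eq using to_weights[OF R(3)] by (simp only: mult_ac)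
qed

lemma energy_ratio:
  fixes p a \<rho> :: real
  assumes "0 \<le> p" "0 \<le> a"
  shows "p + \<rho> * a = (p + \<rho> * a) / (p + a) * (p + a)"
    and "0 < a \<Longrightarrow> \<rho> < 1 \<Longrightarrow> (p + \<rho> * a) / (p + a) < 1"
proof -
  show "p + \<rho> * a = (p + \<rho> * a) / (p + a) * (p + a)"
    using assms by (cases "p + a = 0") (simp_all add: add_nonneg_eq_0_iff)
  assume "0 < a" "\<rho> < 1"
  then have "\<rho> * a < a" by simp
  moreover have "0 < p + a" using \<open>0 < a\<close> assms(1) by simp
  ultimately show "(p + \<rho> * a) / (p + a) < 1" by simp
qed

theorem corollary4:
  fixes d m r n :: nat and \<sigma> \<tau>s \<tau>g c :: real
    and \<phi> \<psi> :: "real \<Rightarrow> real"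
    and H P :: "nat \<Rightarrow> nat \<Rightarrow> real"
  defines "M \<equiv> weights d m r \<sigma> \<tau>s \<tau>g"
      and "\<nu> \<equiv> \<sigma>\<^sup>2 * c\<^sup>2"
  defines "E\<phi> \<equiv> (\<integral>x. (\<phi> x)\<^sup>2 \<partial>gauss \<nu>)"
      and "E\<psi> \<equiv> (\<integral>x. (\<psi> x)\<^sup>2 \<partial>gauss \<nu>)"
  defines "\<rho>0 \<equiv> (\<tau>g\<^sup>2 / \<tau>s\<^sup>2) * (real r / real m) * (\<nu> * E\<psi> / E\<phi>)"
      and "PH \<equiv> frob_sq n d (proj_rows d P H)"
      and "A \<equiv> (\<integral>(Wi, Wg, Wu, Wo, Wot).
                 frob_sq n d (proj_rows d P (F_single d m \<phi> Wi Wo H)) \<partial>M)"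
  defines "\<rho>bar \<equiv> (PH + \<rho>0 * A) / (PH + A)"
  assumes "0 < d" "0 < m" "0 < r" "0 < n"
    and "0 < \<sigma>" "0 < \<tau>s" "0 < \<tau>g"
    and "\<phi> \<in> borel_measurable borel" "\<psi> \<in> borel_measurable borel"
    and "integrable (gauss \<nu>) (\<lambda>x. (\<phi> x)\<^sup>2)"
    and "integrable (gauss \<nu>) (\<lambda>x. (\<psi> x)\<^sup>2)"
    and "\<forall>k<n. sqrt (\<Sum>l<d. (H k l)\<^sup>2) = c"
    and "E\<phi> > 0"
    and "orth_projector d P"
  shows
    "(integrable M (\<lambda>(Wi, Wg, Wu, Wo, Wot).
        frob_inner n d (proj_rows d P H) (proj_rows d P (F_single d m \<phi> Wi Wo H))))
     \<and> (integrable M (\<lambda>(Wi, Wg, Wu, Wo, Wot).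
        frob_inner n d (proj_rows d P H) (proj_rows d P (F_gate d r \<psi> Wg Wu Wot H))))
     \<and> ((\<integral>(Wi, Wg, Wu, Wo, Wot).
        frob_inner n d (proj_rows d P H) (proj_rows d P (F_single d m \<phi> Wi Wo H)) \<partial>M) = 0)
     \<and> ((\<integral>(Wi, Wg, Wu, Wo, Wot).
        frob_inner n d (proj_rows d P H) (proj_rows d P (F_gate d r \<psi> Wg Wu Wot H)) \<partial>M) = 0)
     \<and> (integrable M (\<lambda>(Wi, Wg, Wu, Wo, Wot).
        frob_sq n d (proj_rows d P (\<lambda>k a. H k a + F_single d m \<phi> Wi Wo H k a))))
     \<and> (integrable M (\<lambda>(Wi, Wg, Wu, Wo, Wot).
        frob_sq n d (proj_rows d P (\<lambda>k a. H k a + F_gate d r \<psi> Wg Wu Wot H k a))))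
     \<and> ((\<integral>(Wi, Wg, Wu, Wo, Wot).
        frob_sq n d (proj_rows d P (\<lambda>k a. H k a + F_single d m \<phi> Wi Wo H k a)) \<partial>M) = PH + A)
     \<and> ((\<integral>(Wi, Wg, Wu, Wo, Wot).
        frob_sq n d (proj_rows d P (\<lambda>k a. H k a + F_gate d r \<psi> Wg Wu Wot H k a)) \<partial>M) = PH + \<rho>0 * A)
     \<and> ((\<integral>(Wi, Wg, Wu, Wo, Wot).
        frob_sq n d (proj_rows d P (\<lambda>k a. H k a + F_gate d r \<psi> Wg Wu Wot H k a)) \<partial>M)
     = \<rho>bar * (\<integral>(Wi, Wg, Wu, Wo, Wot).
        frob_sq n d (proj_rows d P (\<lambda>k a. H k a + F_single d m \<phi> Wi Wo H k a)) \<partial>M))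
     \<and> (A > 0 \<and> \<rho>0 < 1 \<longrightarrow> \<rho>bar < 1)"
proof -
  note pos = \<open>0 < \<sigma>\<close> \<open>0 < \<tau>s\<close> \<open>0 < \<tau>g\<close>
  have rows: "\<forall>k<n. (\<Sum>l<d. (H k l)\<^sup>2) = c\<^sup>2"
    using \<open>\<forall>k<n. sqrt (\<Sum>l<d. (H k l)\<^sup>2) = c\<close> by (metis real_sqrt_pow2 sum_nonneg zero_le_power2)
  have \<phi>2: "has_bochner_integral (gauss (\<sigma>\<^sup>2 * c\<^sup>2)) (\<lambda>x. (\<phi> x)\<^sup>2) E\<phi>"
    using \<open>integrable (gauss \<nu>) (\<lambda>x. (\<phi> x)\<^sup>2)\<close> by (simp add: has_bochner_integral_iff E\<phi>_def \<nu>_def)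
  have \<psi>2: "has_bochner_integral (gauss (\<sigma>\<^sup>2 * c\<^sup>2)) (\<lambda>x. (\<psi> x)\<^sup>2) E\<psi>"
    using \<open>integrable (gauss \<nu>) (\<lambda>x. (\<psi> x)\<^sup>2)\<close> by (simp add: has_bochner_integral_iff E\<psi>_def \<nu>_def)
  define T where "T = (\<Sum>a<d. \<Sum>l<d. (P l a)\<^sup>2)"
  note S = single_energy[where d=d and m=m and r=r and n=n and H=H and P=P,
      OF pos \<open>\<phi> \<in> borel_measurable borel\<close> \<phi>2 rows, folded M_def T_def]
  note G = gate_energy[where d=d and m=m and r=r and n=n and H=H and P=P,
      OF pos \<open>\<psi> \<in> borel_measurable borel\<close> \<psi>2 rows, folded M_def T_def]
  have A: "A = real n * real m * \<tau>s\<^sup>2 * E\<phi> * T"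
    using S(2) by (simp add: A_def has_bochner_integral_iff)
  have \<rho>0A: "\<rho>0 * A = real n * real r * \<tau>g\<^sup>2 * (\<sigma>\<^sup>2 * c\<^sup>2 * E\<psi>) * T"
    using \<open>0 < m\<close> \<open>0 < \<tau>s\<close> \<open>E\<phi> > 0\<close> by (simp add: A \<rho>0_def \<nu>_def field_simps)
  have "0 \<le> PH"
    by (auto simp: PH_def frob_sq_def intro!: sum_nonneg)
  moreover have "0 \<le> A"
    unfolding A T_def using \<open>E\<phi> > 0\<close> by (intro mult_nonneg_nonneg sum_nonneg) auto
  ultimately have ratio: "PH + \<rho>0 * A = \<rho>bar * (PH + A)" "0 < A \<and> \<rho>0 < 1 \<longrightarrow> \<rho>bar < 1"
    unfolding \<rho>bar_def using energy_ratio by auto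
  show ?thesis
    using S(1) S(3) G ratio
    by (simp add: has_bochner_integral_iff split_beta' A[symmetric] \<rho>0A PH_def)
qed

end
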